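(* Let $G$ be a triadic simplicial complex, let $s$ be a labeling of the edges of $G$ by $\pm 1$, and let $\overline{s}$ be the configuration on the triadic dual $T_{3}(G)$ that places a ball on exactly those vertices of $T_{3}(G)$ corresponding to imbalanced triangles of $G$ under $s$. Then the nondeterministic triad dynamics on $G$ started from $s$ corresponds to the hyperedge switching process on $T_{3}(G)$ started from $\overline{s}$: flipping the sign of an edge $e$ of $G$ is a legal move of the triad dynamics if and only if choosing the hyperedge $l_{e}$ of $T_{3}(G)$ corresponding to $e$ is a legal move of the hyperedge switching process, and in that case the set of imbalanced triangles after the flip is exactly the set of vertices of $T_{3}(G)$ carrying a ball after switching $l_{e}$.
   Context: A triangle of a graph whose edges are labeled $\pm 1$ is balanced if the product of its three labels is $1$, imbalanced otherwise. Nondeterministic triad dynamics: at each step, for some imbalanced triangle $T$, the sign of an arbitrary edge of $T$ is changed (this may change the balance of other triangles containing that edge). A triadic simplicial complex is a graph in which every edge lies in some triangle. The triadic dual $T_{3}(G)$ is the hypergraph (self-loops, i.e. one-vertex hyperedges, allowed) whose vertices are the triangles of $G$ and which has, for each edge $e$ of $G$, a hyperedge $l_e$ consisting of all triangles of $G$ containing $e$ (so if $e$ lies in a unique triangle $T$, $l_e$ is a self-loop at $T$; a vertex may carry two self-loops). Hyperedge switching process on a hypergraph: some vertices carry a ball; at each step one chooses a hyperedge $C$ that contains at least one vertex carrying a ball (a self-loop at an occupied vertex qualifies), and then puts balls on all empty vertices of $C$ and removes the balls from all occupied vertices of $C$. *)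

theory Defs
  imports Main
begin

definition simple_graph :: "'a set \<Rightarrow> 'a set set \<Rightarrow> bool" where
  "simple_graph V E \<longleftrightarrow> finite V \<and> (\<forall>e\<in>E. e \<subseteq> V \<and> card e = 2)"

definition triangles :: "'a set \<Rightarrow> 'a set set \<Rightarrow> 'a set set" where
  "triangles V E = {T. T \<subseteq> V \<and> card T = 3 \<and> (\<forall>e. e \<subseteq> T \<and> card e = 2 \<longrightarrow> e \<in> E)}"

definition tri_edges :: "'a set \<Rightarrow> 'a set set" where
  "tri_edges T = {e. e \<subseteq> T \<and> card e = 2}"

definition triadic :: "'a set \<Rightarrow> 'a set set \<Rightarrow> bool" where
  "triadic V E \<longleftrightarrow> simple_graph V E \<and> (\<forall>e\<in>E. \<exists>T\<in>triangles V E. e \<subseteq> T)"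

definition signing :: "'a set set \<Rightarrow> ('a set \<Rightarrow> int) \<Rightarrow> bool" where
  "signing E s \<longleftrightarrow> (\<forall>e\<in>E. s e = 1 \<or> s e = -1)"

definition balanced :: "('a set \<Rightarrow> int) \<Rightarrow> 'a set \<Rightarrow> bool" where
  "balanced s T \<longleftrightarrow> (\<Prod>e\<in>tri_edges T. s e) = 1"

definition imbalanced_triangles :: "'a set \<Rightarrow> 'a set set \<Rightarrow> ('a set \<Rightarrow> int) \<Rightarrow> 'a set set" where
  "imbalanced_triangles V E s = {T \<in> triangles V E. \<not> balanced s T}"

definition triad_legal :: "'a set \<Rightarrow> 'a set set \<Rightarrow> ('a set \<Rightarrow> int) \<Rightarrow> 'a set \<Rightarrow> bool" where
  "triad_legal V E s e \<longleftrightarrow> (\<exists>T\<in>imbalanced_triangles V E s. e \<in> tri_edges T)"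

definition flip :: "('a set \<Rightarrow> int) \<Rightarrow> 'a set \<Rightarrow> ('a set \<Rightarrow> int)" where
  "flip s e = s(e := - s e)"

text \<open>Hypergraphs with hyperedges indexed by a set I (allows repeated hyperedges,
  e.g. two self-loops at one vertex): (vertex set, index set, hyperedge map).\<close>
type_synonym ('v, 'i) hypergraph = "'v set \<times> 'i set \<times> ('i \<Rightarrow> 'v set)"

definition triadic_dual :: "'a set \<Rightarrow> 'a set set \<Rightarrow> ('a set, 'a set) hypergraph" where
  "triadic_dual V E = (triangles V E, E, \<lambda>e. {T \<in> triangles V E. e \<subseteq> T})"

definition hyperedge :: "('v, 'i) hypergraph \<Rightarrow> 'i \<Rightarrow> 'v set" where
  "hyperedge H i = snd (snd H) i"

text \<open>Hyperedge switching: choosing hyperedge i from configuration B (set of occupied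
  vertices) is legal iff i is a hyperedge index and it contains an occupied vertex;
  switching toggles occupancy on all vertices of the hyperedge.\<close>
definition switch_legal :: "('v, 'i) hypergraph \<Rightarrow> 'v set \<Rightarrow> 'i \<Rightarrow> bool" where
  "switch_legal H B i \<longleftrightarrow> i \<in> fst (snd H) \<and> hyperedge H i \<inter> B \<noteq> {}"

definition switch :: "('v, 'i) hypergraph \<Rightarrow> 'v set \<Rightarrow> 'i \<Rightarrow> 'v set" where
  "switch H B i = (B - hyperedge H i) \<union> (hyperedge H i - B)"

end

theory Submission
  imports Defs
begin

text \<open>A triangle lies in the hyperedge \<open>l\<^sub>e\<close> exactly when \<open>e\<close> is one of its edges, and
  flipping \<open>e\<close> negates the sign product of precisely those triangles, so it toggles their
  balance and leaves every other triangle unchanged. This is the switching of \<open>l\<^sub>e\<close>; and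
  \<open>l\<^sub>e\<close> carries a ball iff some triangle containing \<open>e\<close> is imbalanced, which is legality
  of the flip.\<close>

lemma finite_tri_edges: "finite T \<Longrightarrow> finite (tri_edges T)"
  unfolding tri_edges_def by (rule finite_subset[of _ "Pow T"]) auto

lemma finite_tri_edges_triangle: "T \<in> triangles V E \<Longrightarrow> finite (tri_edges T)"
  by (rule finite_tri_edges) (auto simp: triangles_def intro: card_ge_0_finite)

lemma tri_edges_subset_edges: "T \<in> triangles V E \<Longrightarrow> tri_edges T \<subseteq> E"
  by (auto simp: triangles_def tri_edges_def)

lemma mem_tri_edges_iff_subset: "card e = 2 \<Longrightarrow> e \<in> tri_edges T \<longleftrightarrow> e \<subseteq> T"
  by (simp add: tri_edges_def)

lemma abs_prod_eq_one:
  fixes f :: "'b \<Rightarrow> 'c::linordered_idom"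
  shows "(\<And>x. x \<in> A \<Longrightarrow> \<bar>f x\<bar> = 1) \<Longrightarrow> \<bar>prod f A\<bar> = 1"
proof (induction A rule: infinite_finite_induct)
  case (insert x F)
  thus ?case by (simp add: abs_mult)
qed auto

lemma prod_signing_cases:
  assumes "signing E s" and "A \<subseteq> E"
  shows "(\<Prod>x\<in>A. s x) = 1 \<or> (\<Prod>x\<in>A. s x) = -1"
proof -
  have "\<bar>\<Prod>x\<in>A. s x\<bar> = 1"
    by (rule abs_prod_eq_one) (use assms in \<open>force simp: signing_def\<close>)
  thus ?thesis by linarith
qed

lemma prod_flip_mem:
  assumes "finite A" and "e \<in> A"
  shows "(\<Prod>x\<in>A. flip s e x) = - (\<Prod>x\<in>A. s x)"
proof -
  have "(\<Prod>x\<in>A - {e}. flip s e x) = (\<Prod>x\<in>A - {e}. s x)"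
    by (rule prod.cong) (auto simp: flip_def)
  thus ?thesis
    using prod.remove[OF assms, of "flip s e"] prod.remove[OF assms, of s]
    by (simp add: flip_def)
qed

lemma prod_flip_nonmem: "e \<notin> A \<Longrightarrow> (\<Prod>x\<in>A. flip s e x) = (\<Prod>x\<in>A. s x)"
  by (rule prod.cong) (auto simp: flip_def)

lemma balanced_flip_mem:
  assumes "signing E s" and "T \<in> triangles V E" and "e \<in> tri_edges T"
  shows "balanced (flip s e) T \<longleftrightarrow> \<not> balanced s T"
  using prod_signing_cases[OF assms(1) tri_edges_subset_edges[OF assms(2)]]
    prod_flip_mem[OF finite_tri_edges_triangle[OF assms(2)] assms(3), of s]
  by (auto simp: balanced_def)

lemma balanced_flip_nonmem: "e \<notin> tri_edges T \<Longrightarrow> balanced (flip s e) T \<longleftrightarrow> balanced s T"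
  by (simp add: balanced_def prod_flip_nonmem)

lemma hyperedge_triadic_dual:
  "hyperedge (triadic_dual V E) e = {T \<in> triangles V E. e \<subseteq> T}"
  by (simp add: hyperedge_def triadic_dual_def)

lemma card_edge_eq_2: "triadic V E \<Longrightarrow> e \<in> E \<Longrightarrow> card e = 2"
  by (simp add: triadic_def simple_graph_def)

lemma triad_legal_iff_switch_legal:
  assumes "triadic V E" and "e \<in> E"
  shows "triad_legal V E s e
           \<longleftrightarrow> switch_legal (triadic_dual V E) (imbalanced_triangles V E s) e"
  using assms mem_tri_edges_iff_subset[OF card_edge_eq_2[OF assms]]
  unfolding triad_legal_def switch_legal_def hyperedge_triadic_dual
  by (auto simp: imbalanced_triangles_def triadic_dual_def)

lemma imbalanced_triangles_flip:
  assumes "triadic V E" and "signing E s" and "e \<in> E"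
  shows "imbalanced_triangles V E (flip s e)
           = switch (triadic_dual V E) (imbalanced_triangles V E s) e"
proof (rule set_eqI)
  fix T
  have edge_iff: "e \<in> tri_edges T \<longleftrightarrow> e \<subseteq> T"
    using mem_tri_edges_iff_subset[OF card_edge_eq_2[OF assms(1,3)]] .
  show "T \<in> imbalanced_triangles V E (flip s e)
          \<longleftrightarrow> T \<in> switch (triadic_dual V E) (imbalanced_triangles V E s) e"
  proof (cases "T \<in> triangles V E \<and> e \<subseteq> T")
    case True
    hence "balanced (flip s e) T \<longleftrightarrow> \<not> balanced s T"
      using balanced_flip_mem[OF assms(2)] edge_iff by blast
    thus ?thesis
      using True by (auto simp: switch_def hyperedge_triadic_dual imbalanced_triangles_def)
  next
    case False
    hence "T \<in> triangles V E \<Longrightarrow> balanced (flip s e) T \<longleftrightarrow> balanced s T"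
      using balanced_flip_nonmem edge_iff by blast
    thus ?thesis
      using False by (auto simp: switch_def hyperedge_triadic_dual imbalanced_triangles_def)
  qed
qed

theorem lemma1:
  fixes V :: "'a set" and E :: "'a set set" and s :: "'a set \<Rightarrow> int" and e :: "'a set"
  assumes "triadic V E"
    and "signing E s"
    and "e \<in> E"
  shows "(triad_legal V E s e
           \<longleftrightarrow> switch_legal (triadic_dual V E) (imbalanced_triangles V E s) e)
         \<and> (triad_legal V E s e \<longrightarrow>
           imbalanced_triangles V E (flip s e)
             = switch (triadic_dual V E) (imbalanced_triangles V E s) e)"
  using triad_legal_iff_switch_legal[OF assms(1,3)] imbalanced_triangles_flip[OF assms]
  by blast

end
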